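(* Let $G$ be a cubic graph with a 3-decomposition, let $u$ be a vertex of $G$ with neighbours $v_1,v_2,v_3$, and let $P$ be a copy, on new vertices, of the Petersen graph with one vertex removed; let $p_1,p_2,p_3$ be the three vertices of degree 2 in $P$. Let $H$ be obtained from $G$ by deleting $u$, adding $P$, and adding the edges $p_1v_1,p_2v_2,p_3v_3$. Then $H$ has a 3-decomposition.
   Context: All graphs are finite and simple; cubic means 3-regular. A 3-decomposition of a graph is a partition of its edge set into the edge sets of a spanning tree, a (possibly empty) 2-regular subgraph, and a (possibly empty) matching. *)

theory Defs
  imports Main
begin

definition graph :: "'a set \<Rightarrow> 'a set set \<Rightarrow> bool" where
  "graph V E \<longleftrightarrow> finite V \<and> (\<forall>e\<in>E. \<exists>x y. x \<in> V \<and> y \<in> V \<and> x \<noteq> y \<and> e = {x, y})"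

definition degree :: "'a set set \<Rightarrow> 'a \<Rightarrow> nat" where
  "degree E v = card {e \<in> E. v \<in> e}"

definition cubic :: "'a set \<Rightarrow> 'a set set \<Rightarrow> bool" where
  "cubic V E \<longleftrightarrow> graph V E \<and> (\<forall>v\<in>V. degree E v = 3)"

definition connected_on :: "'a set \<Rightarrow> 'a set set \<Rightarrow> bool" where
  "connected_on V T \<longleftrightarrow> (\<forall>x\<in>V. \<forall>y\<in>V. (\<lambda>a b. {a, b} \<in> T)\<^sup>*\<^sup>* x y)"

definition is_cycle :: "'a set set \<Rightarrow> 'a list \<Rightarrow> bool" where
  "is_cycle E xs \<longleftrightarrow> length xs \<ge> 3 \<and> distinct xs \<and>
     (\<forall>i < length xs. {xs ! i, xs ! ((i + 1) mod length xs)} \<in> E)"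

definition acyclic_edges :: "'a set set \<Rightarrow> bool" where
  "acyclic_edges E \<longleftrightarrow> \<not> (\<exists>xs. is_cycle E xs)"

definition spanning_tree :: "'a set \<Rightarrow> 'a set set \<Rightarrow> 'a set set \<Rightarrow> bool" where
  "spanning_tree V E T \<longleftrightarrow> T \<subseteq> E \<and> connected_on V T \<and> acyclic_edges T"

text \<open>(Possibly empty) 2-regular subgraph, given by its edge set; its vertices are those covered.\<close>
definition two_regular_sub :: "'a set set \<Rightarrow> 'a set set \<Rightarrow> bool" where
  "two_regular_sub E C \<longleftrightarrow> C \<subseteq> E \<and> (\<forall>v \<in> \<Union>C. degree C v = 2)"

definition matching :: "'a set set \<Rightarrow> 'a set set \<Rightarrow> bool" where
  "matching E M \<longleftrightarrow> M \<subseteq> E \<and> (\<forall>e\<in>M. \<forall>f\<in>M. e \<noteq> f \<longrightarrow> e \<inter> f = {})"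

definition three_decomposition :: "'a set \<Rightarrow> 'a set set \<Rightarrow> bool" where
  "three_decomposition V E \<longleftrightarrow> (\<exists>T C M. spanning_tree V E T \<and> two_regular_sub E C \<and> matching E M \<and>
      T \<union> C \<union> M = E \<and> T \<inter> C = {} \<and> T \<inter> M = {} \<and> C \<inter> M = {})"

text \<open>Petersen graph on 0..9: outer 5-cycle, spokes, inner pentagram.\<close>
definition petersen_edges :: "nat set set" where
  "petersen_edges = {{i, (i + 1) mod 5} | i. i < 5} \<union> {{i, i + 5} | i. i < 5}
                    \<union> {{i + 5, (i + 2) mod 5 + 5} | i. i < 5}"

definition P_verts :: "nat set" where "P_verts = {1..9}"
definition P_edges :: "nat set set" where "P_edges = {e \<in> petersen_edges. 0 \<notin> e}"

definition H_verts :: "'a set \<Rightarrow> 'a \<Rightarrow> ('a + nat) set" where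
  "H_verts V u = Inl ` (V - {u}) \<union> Inr ` P_verts"

definition H_edges :: "'a set set \<Rightarrow> 'a \<Rightarrow> 'a \<Rightarrow> 'a \<Rightarrow> 'a \<Rightarrow> nat \<Rightarrow> nat \<Rightarrow> nat \<Rightarrow> ('a + nat) set set" where
  "H_edges E u v1 v2 v3 p1 p2 p3 =
     (`) Inl ` {e \<in> E. u \<notin> e} \<union> (`) Inr ` P_edges
     \<union> {{Inl v1, Inr p1}, {Inl v2, Inr p2}, {Inl v3, Inr p3}}"

end

(*
  Let T, C, M be a 3-decomposition of G. Since T spans G, C is 2-regular and M is a matching,
  the three edges at u lie all in T, or two in T and one in M, or one in T and two in C.
  Replacing u by the gadget turns each edge u v_i into a link v_i p_i, which stays in the class
  of its edge, except that the link of the matching edge joins the tree. It then suffices to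
  split the gadget's edges into a forest TP, a subgraph CP and a matching MP such that CP
  closes up the cycle of C through u, TP connects the tree ports and reaches every gadget vertex
  from a port whose link is a tree link, and TP has few enough edges: the glued tree is then
  connected with |V(H)| - 1 edges, hence a spanning tree. For the Petersen gadget the seven
  possible patterns at the ports are handled by explicit decompositions.
*)
theory Submission
  imports Defs "HOL-Library.Transitive_Closure_Table"
begin

section \<open>Walks, trees and degrees\<close>

abbreviation reachable :: "'a set set \<Rightarrow> 'a \<Rightarrow> 'a \<Rightarrow> bool" where
  "reachable T \<equiv> (\<lambda>a b. {a, b} \<in> T)\<^sup>*\<^sup>*"

lemma reachable_sym: "reachable T x y \<Longrightarrow> reachable T y x"
  by (rule sympD[OF symp_rtranclp]) (auto simp: symp_def insert_commute)

lemma reachable_image: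
  assumes "reachable A x y" and "\<And>a b. {a, b} \<in> A \<Longrightarrow> {f a, f b} \<in> B"
  shows "reachable B (f x) (f y)"
  using assms(1)
proof induction
  case (step y z)
  then show ?case
    using assms(2) by (blast intro: rtranclp.rtrancl_into_rtrancl)
qed simp

lemma reachable_trans_edges:
  assumes "reachable A x y" and "\<And>a b. {a, b} \<in> A \<Longrightarrow> reachable B a b"
  shows "reachable B x y"
  using assms(1)
proof induction
  case (step y z)
  show ?case
    using rtranclp_trans[OF step.IH assms(2)[OF step.hyps(2)]] .
qed simp

lemma connected_on_if_reachable_root:
  assumes "\<And>x. x \<in> V \<Longrightarrow> reachable T x r"
  shows "connected_on V T"
  unfolding connected_on_def
proof (intro ballI)
  fix x y assume "x \<in> V" "y \<in> V"
  show "reachable T x y"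
    using rtranclp_trans[OF assms[OF \<open>x \<in> V\<close>] reachable_sym[OF assms[OF \<open>y \<in> V\<close>]]] .
qed

lemma connected_on_singleton: "connected_on {x} T"
  unfolding connected_on_def by simp

lemma connected_on_insert:
  assumes "connected_on S T" "\<exists>y\<in>S. {x, y} \<in> T"
  shows "connected_on (insert x S) T"
proof -
  obtain y where y: "y \<in> S" "{x, y} \<in> T"
    using assms(2) by blast
  have "reachable T z y" if "z \<in> insert x S" for z
    using that assms(1) y unfolding connected_on_def by (auto intro: r_into_rtranclp)
  then show ?thesis
    by (rule connected_on_if_reachable_root)
qed

lemma connected_on_remove_edge:
  assumes "connected_on V T" and "reachable (T - {{x, y}}) x y"
  shows "connected_on V (T - {{x, y}})"
  unfolding connected_on_def
proof (intro ballI)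
  fix v w assume "v \<in> V" "w \<in> V"
  have "reachable (T - {{x, y}}) a b" if "{a, b} \<in> T" for a b
  proof (cases "{a, b} = {x, y}")
    case True
    then consider "a = x" "b = y" | "a = y" "b = x"
      by (auto simp: doubleton_eq_iff)
    then show ?thesis
      by cases (use assms(2) reachable_sym[OF assms(2)] in simp_all)
  next
    case False
    with that show ?thesis
      by (intro r_into_rtranclp) simp
  qed
  then show "reachable (T - {{x, y}}) v w"
    using assms(1) \<open>v \<in> V\<close> \<open>w \<in> V\<close> reachable_trans_edges unfolding connected_on_def by metis
qed

lemma distinct_doubleton_nth_eq_iff:
  assumes "distinct xs" "i < length xs" "j < length xs" "k < length xs" "l < length xs"
  shows "{xs ! i, xs ! j} = {xs ! k, xs ! l} \<longleftrightarrow> (i = k \<and> j = l) \<or> (i = l \<and> j = k)"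
  using assms by (auto simp: doubleton_eq_iff nth_eq_iff_index_eq)

lemma cycle_closing_edge_redundant:
  assumes "is_cycle T xs"
  defines "n \<equiv> length xs"
  shows "reachable (T - {{xs ! (n - 1), xs ! 0}}) (xs ! (n - 1)) (xs ! 0)"
proof -
  have n: "n \<ge> 3" and dist: "distinct xs" and edge: "\<And>i. i < n \<Longrightarrow> {xs ! i, xs ! ((i + 1) mod n)} \<in> T"
    using assms unfolding is_cycle_def n_def by auto
  have "reachable (T - {{xs ! (n - 1), xs ! 0}}) (xs ! 0) (xs ! k)" if "k < n" for k
    using that
  proof (induction k)
    case (Suc k)
    have "{xs ! k, xs ! Suc k} \<in> T"
      using edge[of k] Suc.prems by simp
    moreover have "{xs ! k, xs ! Suc k} \<noteq> {xs ! (n - 1), xs ! 0}"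
      using Suc.prems n dist by (subst distinct_doubleton_nth_eq_iff) (auto simp: n_def)
    ultimately show ?case
      using Suc by (auto intro: rtranclp.rtrancl_into_rtrancl)
  qed simp
  from this[of "n - 1"] have "reachable (T - {{xs ! (n - 1), xs ! 0}}) (xs ! 0) (xs ! (n - 1))"
    using n by simp
  then show ?thesis
    by (rule reachable_sym)
qed

lemma acyclic_edges_bridge:
  assumes "acyclic_edges T" "{x, y} \<in> T" "x \<noteq> y"
  shows "\<not> reachable (T - {{x, y}}) y x"
proof
  assume "reachable (T - {{x, y}}) y x"
  then obtain zs where path: "rtrancl_path (\<lambda>a b. {a, b} \<in> T - {{x, y}}) y zs x" and "distinct (y # zs)"
    by (meson rtranclp_eq_rtrancl_path rtrancl_path_distinct)
  have "zs \<noteq> []"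
    using path assms(3) by (auto elim: rtrancl_path.cases)
  then have last: "(y # zs) ! length zs = x"
    using rtrancl_path_last[OF path] by (simp add: last_conv_nth)
  have step: "{(y # zs) ! i, zs ! i} \<in> T - {{x, y}}" if "i < length zs" for i
    using rtrancl_path_nth[OF path that] .
  have "length zs \<noteq> 1"
  proof
    assume "length zs = 1"
    then have "zs ! 0 = x"
      using last by simp
    then show False
      using step[of 0] \<open>length zs = 1\<close> by (simp add: insert_commute)
  qed
  have "is_cycle T (y # zs)"
    unfolding is_cycle_def
  proof (intro conjI allI impI)
    show "3 \<le> length (y # zs)"
      using \<open>zs \<noteq> []\<close> \<open>length zs \<noteq> 1\<close> by (cases "length zs") auto
    show "distinct (y # zs)" by fact
  next
    fix i assume "i < length (y # zs)"
    then consider "i < length zs" | "i = length zs" by fastforce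
    then show "{(y # zs) ! i, (y # zs) ! ((i + 1) mod length (y # zs))} \<in> T"
      by cases (use step last assms(2) in \<open>auto simp: insert_commute\<close>)
  qed
  then show False
    using assms(1) unfolding acyclic_edges_def by blast
qed

lemma graph_edge_endpoints:
  assumes "graph V T" "{x, y} \<in> T"
  shows "x \<in> V" "y \<in> V" "x \<noteq> y"
  using assms unfolding graph_def by (fastforce simp: doubleton_eq_iff)+

lemma graph_subset: "graph V T \<Longrightarrow> T' \<subseteq> T \<Longrightarrow> graph V T'"
  unfolding graph_def by blast

lemma graph_finite_edges:
  assumes "graph V T"
  shows "finite T"
proof -
  have "T \<subseteq> Pow V" "finite V"
    using assms unfolding graph_def by auto
  then show ?thesis
    by (meson finite_Pow_iff finite_subset)
qed

lemma graph_insert_edge: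
  "graph V E \<Longrightarrow> x \<in> V \<Longrightarrow> y \<in> V \<Longrightarrow> x \<noteq> y \<Longrightarrow> graph V (insert {x, y} E)"
  unfolding graph_def by blast

lemma graph_no_edges: "finite V \<Longrightarrow> graph V {}"
  unfolding graph_def by blast

lemma Collect_mem_insert:
  "{x \<in> insert a A. P x} = (if P a then insert a {x \<in> A. P x} else {x \<in> A. P x})"
  "{x \<in> {}. P x} = {}"
  by auto

lemma degree_insert:
  "finite A \<Longrightarrow> degree (insert e A) v = (if v \<in> e \<and> e \<notin> A then Suc (degree A v) else degree A v)"
  unfolding degree_def by (simp only: Collect_mem_insert) (simp add: card_insert_if)

lemma degree_empty: "degree {} v = 0"
  unfolding degree_def by simp

lemma connected_parent:
  assumes "graph V T" "connected_on V T" "r \<in> V"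
  obtains h :: "'a \<Rightarrow> nat" and par :: "'a \<Rightarrow> 'a"
  where "\<And>x. x \<in> V \<Longrightarrow> x \<noteq> r \<Longrightarrow> {x, par x} \<in> T \<and> par x \<in> V \<and> h (par x) < h x"
proof -
  let ?R = "\<lambda>a b. {a, b} \<in> T"
  define h where "h x = (LEAST n. (?R ^^ n) x r)" for x
  define par where "par x = (SOME y. ?R x y \<and> h y < h x)" for x
  have "?R x (par x) \<and> h (par x) < h x" if x: "x \<in> V" "x \<noteq> r" for x
  proof -
    have "\<exists>n. (?R ^^ n) x r"
      using assms(2,3) x(1) unfolding connected_on_def by (blast intro: rtranclp_imp_relpowp)
    then have path: "(?R ^^ h x) x r"
      unfolding h_def by (rule LeastI_ex)
    then obtain k where k: "h x = Suc k"
      using x(2) by (cases "h x") auto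
    with path have "(?R ^^ Suc k) x r" by simp
    then obtain y where y: "?R x y" "(?R ^^ k) y r"
      by (rule relpowp_Suc_E2)
    have "h y \<le> k"
      unfolding h_def using y(2) by (rule Least_le)
    with y k have "?R x y \<and> h y < h x" by simp
    then show ?thesis
      unfolding par_def by (rule someI)
  qed
  then show ?thesis
    using that graph_edge_endpoints[OF assms(1)] by blast
qed

lemma connected_card_le:
  assumes "graph V T" "connected_on V T"
  shows "card V \<le> card T + 1"
proof (cases "V = {}")
  case False
  then obtain r where r: "r \<in> V" by blast
  obtain h :: "'a \<Rightarrow> nat" and par
    where par: "\<And>x. x \<in> V \<Longrightarrow> x \<noteq> r \<Longrightarrow> {x, par x} \<in> T \<and> par x \<in> V \<and> h (par x) < h x"
    by (rule connected_parent[OF assms r]) blast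
  have "inj_on (\<lambda>x. {x, par x}) (V - {r})"
  proof (rule inj_onI)
    fix x y assume x: "x \<in> V - {r}" and y: "y \<in> V - {r}" and eq: "{x, par x} = {y, par y}"
    show "x = y"
    proof (rule ccontr)
      assume "x \<noteq> y"
      with eq have "y = par x" "x = par y"
        by (auto simp: doubleton_eq_iff)
      then show False
        using par[of x] par[of y] x y by auto
    qed
  qed
  moreover have "(\<lambda>x. {x, par x}) ` (V - {r}) \<subseteq> T"
    using par by blast
  ultimately have "card (V - {r}) \<le> card T"
    using card_inj_on_le graph_finite_edges[OF assms(1)] by blast
  then show ?thesis
    using r by (simp add: card_Diff_singleton)
qed simp

text \<open>In a tree every edge is the parent edge of one of its endpoints: otherwise deleting it
  would keep both endpoints joined to the root.\<close>
lemma tree_card_le: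
  assumes "graph V T" "connected_on V T" "acyclic_edges T" "V \<noteq> {}"
  shows "card T + 1 \<le> card V"
proof -
  obtain r where r: "r \<in> V"
    using assms(4) by blast
  obtain h :: "'a \<Rightarrow> nat" and par
    where par: "\<And>x. x \<in> V \<Longrightarrow> x \<noteq> r \<Longrightarrow> {x, par x} \<in> T \<and> par x \<in> V \<and> h (par x) < h x"
    by (rule connected_parent[OF assms(1,2) r]) blast
  have "T \<subseteq> (\<lambda>x. {x, par x}) ` (V - {r})"
  proof
    fix e assume e: "e \<in> T"
    then obtain a b where ab: "e = {a, b}" "a \<in> V" "b \<in> V" "a \<noteq> b"
      using assms(1) unfolding graph_def by blast
    show "e \<in> (\<lambda>x. {x, par x}) ` (V - {r})"
    proof (rule ccontr)
      assume not_parent: "e \<notin> (\<lambda>x. {x, par x}) ` (V - {r})"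
      have "reachable (T - {e}) x r" if "x \<in> V" for x
        using that
      proof (induction "h x" arbitrary: x rule: less_induct)
        case less
        show ?case
        proof (cases "x = r")
          case False
          with less.prems par have "{x, par x} \<in> T - {e}"
            using not_parent by blast
          moreover have "reachable (T - {e}) (par x) r"
            using less par[OF less.prems False] by blast
          ultimately show ?thesis
            by (rule converse_rtranclp_into_rtranclp)
        qed simp
      qed
      then have "reachable (T - {{a, b}}) b a"
        using ab by (blast intro: rtranclp_trans reachable_sym)
      then show False
        using acyclic_edges_bridge[OF assms(3)] e ab by blast
    qed
  qed
  then have "card T \<le> card ((\<lambda>x. {x, par x}) ` (V - {r}))"
    using assms(1) unfolding graph_def by (simp add: card_mono)
  also have "\<dots> \<le> card (V - {r})"
    by (rule card_image_le) (use assms(1) in \<open>simp add: graph_def\<close>)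
  also have "\<dots> = card V - 1"
    using r by (simp add: card_Diff_singleton)
  finally show ?thesis
    using r assms(1) card_gt_0_iff[of V] unfolding graph_def by auto
qed

text \<open>Deleting an edge of a cycle would keep the graph connected with even fewer edges.\<close>
lemma connected_acyclic_if_card_le:
  assumes "graph V T" "connected_on V T" "card T + 1 \<le> card V"
  shows "acyclic_edges T"
  unfolding acyclic_edges_def
proof
  assume "\<exists>xs. is_cycle T xs"
  then obtain xs where cyc: "is_cycle T xs" by blast
  obtain n where n: "length xs = Suc n"
    using cyc unfolding is_cycle_def by (cases "length xs") auto
  define x y where "x = xs ! n" and "y = xs ! 0"
  have "{x, y} \<in> T"
    using cyc n unfolding is_cycle_def x_def y_def by auto
  have "connected_on V (T - {{x, y}})"
    using connected_on_remove_edge[OF assms(2) cycle_closing_edge_redundant[OF cyc]] n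
    unfolding x_def y_def by simp
  then have "card V \<le> card (T - {{x, y}}) + 1"
    using connected_card_le graph_subset[OF assms(1)] by blast
  also have "\<dots> = card T"
    using \<open>{x, y} \<in> T\<close> graph_finite_edges[OF assms(1)] card_gt_0_iff[of T]
    by (auto simp: card_Diff_singleton)
  finally show False
    using assms(3) by simp
qed

section \<open>Gluing a gadget into a graph\<close>

lemma Inl_image_eq_Inr_image_iff: "Inl ` a = Inr ` b \<longleftrightarrow> a = {} \<and> b = {}"
  by blast

lemma pairwise_disjnt_Un:
  assumes "pairwise disjnt S" "pairwise disjnt S'" "\<And>e f. e \<in> S \<Longrightarrow> f \<in> S' \<Longrightarrow> disjnt e f"
  shows "pairwise disjnt (S \<union> S')"
  using assms unfolding pairwise_def by (metis Un_iff disjnt_sym)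

lemma card_fiber_inj_on:
  assumes "inj_on f A"
  shows "card {a \<in> A. f a = b} = (if b \<in> f ` A then 1 else 0)"
proof (cases "b \<in> f ` A")
  case True
  then obtain a where "a \<in> A" "f a = b"
    by blast
  with assms have "{a \<in> A. f a = b} = {a}"
    unfolding inj_on_def by blast
  with True show ?thesis
    by simp
next
  case False
  then have empty: "{a \<in> A. f a = b} = {}"
    by blast
  show ?thesis
    unfolding empty using False by simp
qed

definition glue_edges :: "'a set set \<Rightarrow> 'b set set \<Rightarrow> ('a \<times> 'b) set \<Rightarrow> ('a + 'b) set set" where
  "glue_edges A B L = (`) Inl ` A \<union> (`) Inr ` B \<union> (\<lambda>(v, p). {Inl v, Inr p}) ` L"

lemma glue_edges_Un:
  "glue_edges (A \<union> A') (B \<union> B') (L \<union> L') = glue_edges A B L \<union> glue_edges A' B' L'"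
  unfolding glue_edges_def image_Un by (simp add: Un_ac)

lemma glue_edges_disjoint:
  assumes "A \<inter> A' = {}" "B \<inter> B' = {}" "L \<inter> L' = {}" "{} \<notin> B \<union> B'"
  shows "glue_edges A B L \<inter> glue_edges A' B' L' = {}"
proof -
  let ?K = "\<lambda>L. (\<lambda>(v, p). {Inl v, Inr p}) ` L :: ('a + 'b) set set"
  have "(`) Inl ` A \<inter> ((`) Inl ` A' :: ('a + 'b) set set) = {}"
    using assms(1) by (auto simp: inj_image_eq_iff)
  moreover have "(`) Inr ` B \<inter> ((`) Inr ` B' :: ('a + 'b) set set) = {}"
    using assms(2) by (auto simp: inj_image_eq_iff)
  moreover have "?K L \<inter> ?K L' = {}"
    using assms(3) by (auto simp: doubleton_eq_iff)
  moreover have "(`) Inl ` X \<inter> ((`) Inr ` Y :: ('a + 'b) set set) = {}" if "{} \<notin> Y" for X Y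
    using that by (auto simp: Inl_image_eq_Inr_image_iff)
  moreover have "(`) Inl ` X \<inter> ?K Z = {}" "(`) Inr ` Y \<inter> ?K Z = {}" for X Y Z
    by auto
  ultimately show ?thesis
    unfolding glue_edges_def Int_Un_distrib Int_Un_distrib2 Un_empty
    using assms(4) by (simp add: Int_commute)
qed

lemma card_glue_edges:
  assumes "finite A" "finite B" "finite L" "{} \<notin> B"
  shows "card (glue_edges A B L) = card A + card B + card L"
proof -
  have inj: "inj_on ((`) Inl :: _ \<Rightarrow> ('a + 'b) set) A" "inj_on ((`) Inr :: _ \<Rightarrow> ('a + 'b) set) B"
    "inj_on (\<lambda>(v, p). {Inl v, Inr p} :: ('a + 'b) set) L"
    by (auto simp: inj_on_def inj_image_eq_iff doubleton_eq_iff)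
  have "(`) Inl ` A \<inter> (`) Inr ` B = {}" "((`) Inl ` A \<union> (`) Inr ` B) \<inter> (\<lambda>(v, p). {Inl v, Inr p}) ` L = {}"
    using assms(4) by (auto simp: Inl_image_eq_Inr_image_iff)
  then show ?thesis
    unfolding glue_edges_def using assms(1-3) inj
    by (simp add: card_Un_disjoint card_image)
qed

lemma degree_glue_edges_Inl:
  fixes A :: "'a set set" and B :: "'b set set"
  assumes "finite A" "finite L"
  shows "degree (glue_edges A B L) (Inl x) = degree A x + card {l \<in> L. fst l = x}"
proof -
  let ?K = "\<lambda>(v, p). {Inl v, Inr p} :: ('a + 'b) set"
  have eq: "{e \<in> glue_edges A B L. Inl x \<in> e} = (`) Inl ` {e \<in> A. x \<in> e} \<union> ?K ` {l \<in> L. fst l = x}"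
    unfolding glue_edges_def by auto
  have inj: "inj_on ((`) Inl :: _ \<Rightarrow> ('a + 'b) set) {e \<in> A. x \<in> e}" "inj_on ?K {l \<in> L. fst l = x}"
    by (auto simp: inj_on_def inj_image_eq_iff doubleton_eq_iff)
  then show ?thesis
    unfolding degree_def eq using assms by (subst card_Un_disjoint) (auto simp: card_image)
qed

lemma degree_glue_edges_Inr:
  fixes A :: "'a set set" and B :: "'b set set"
  assumes "finite B" "finite L"
  shows "degree (glue_edges A B L) (Inr p) = degree B p + card {l \<in> L. snd l = p}"
proof -
  let ?K = "\<lambda>(v, p). {Inl v, Inr p} :: ('a + 'b) set"
  have eq: "{e \<in> glue_edges A B L. Inr p \<in> e} = (`) Inr ` {e \<in> B. p \<in> e} \<union> ?K ` {l \<in> L. snd l = p}"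
    unfolding glue_edges_def by auto
  have inj: "inj_on ((`) Inr :: _ \<Rightarrow> ('a + 'b) set) {e \<in> B. p \<in> e}" "inj_on ?K {l \<in> L. snd l = p}"
    by (auto simp: inj_on_def inj_image_eq_iff doubleton_eq_iff)
  then show ?thesis
    unfolding degree_def eq using assms by (subst card_Un_disjoint) (auto simp: card_image)
qed

lemma glue_edges_pairwise_disjnt:
  fixes A :: "'a set set" and B :: "'b set set"
  assumes "pairwise disjnt A" "pairwise disjnt B"
  shows "pairwise disjnt (glue_edges A B {})"
proof -
  have image: "pairwise disjnt ((`) f ` X)" if "inj f" "pairwise disjnt X" for f :: "'c \<Rightarrow> 'a + 'b" and X
    by (rule pairwise_imageI) (use that in \<open>auto simp: pairwise_def disjnt_def image_Int[symmetric]\<close>)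
  show ?thesis
    unfolding glue_edges_def image_empty Un_empty_right
    by (rule pairwise_disjnt_Un[OF image[OF inj_Inl assms(1)] image[OF inj_Inr assms(2)]])
      (auto simp: disjnt_def)
qed

lemma glue_edges_Inl_edge: "{a, b} \<in> A \<Longrightarrow> {Inl a, Inl b} \<in> glue_edges A B L"
  unfolding glue_edges_def by (intro UnI1 image_eqI[of _ _ "{a, b}"]) simp_all

lemma glue_edges_Inr_edge: "{a, b} \<in> B \<Longrightarrow> {Inr a, Inr b} \<in> glue_edges A B L"
  unfolding glue_edges_def by (intro UnI1 UnI2 image_eqI[of _ _ "{a, b}"]) simp_all

lemma glue_edges_link: "(v, p) \<in> L \<Longrightarrow> {Inl v, Inr p} \<in> glue_edges A B L"
  unfolding glue_edges_def by (intro UnI2 image_eqI[of _ _ "(v, p)"]) simp_all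

lemma reachable_glue_edges_Inr:
  "reachable B a b \<Longrightarrow> reachable (glue_edges A B L) (Inr a) (Inr b)"
  by (erule reachable_image) (rule glue_edges_Inr_edge)

lemma graph_glue_edges:
  assumes "graph V A" "graph W B" "L \<subseteq> V \<times> W"
  shows "graph (Inl ` V \<union> Inr ` W) (glue_edges A B L)"
  unfolding graph_def
proof (intro conjI ballI)
  show "finite (Inl ` V \<union> Inr ` W)"
    using assms(1,2) unfolding graph_def by simp
next
  fix e assume "e \<in> glue_edges A B L"
  then consider (left) a where "a \<in> A" "e = Inl ` a" | (right) b where "b \<in> B" "e = Inr ` b"
    | (link) v p where "(v, p) \<in> L" "e = {Inl v, Inr p}"
    unfolding glue_edges_def by auto
  then show "\<exists>x y. x \<in> Inl ` V \<union> Inr ` W \<and> y \<in> Inl ` V \<union> Inr ` W \<and> x \<noteq> y \<and> e = {x, y}"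
  proof cases
    case left
    with assms(1) obtain x y where "x \<in> V" "y \<in> V" "x \<noteq> y" "a = {x, y}"
      unfolding graph_def by blast
    with left show ?thesis
      by (intro exI[of _ "Inl x"] exI[of _ "Inl y"]) simp
  next
    case right
    with assms(2) obtain x y where "x \<in> W" "y \<in> W" "x \<noteq> y" "b = {x, y}"
      unfolding graph_def by blast
    with right show ?thesis
      by (intro exI[of _ "Inr x"] exI[of _ "Inr y"]) simp
  next
    case link
    with assms(3) show ?thesis
      by (intro exI[of _ "Inl v"] exI[of _ "Inr p"]) auto
  qed
qed

lemma Inl_in_Union_glue_edges: "Inl x \<in> \<Union>(glue_edges A B L) \<longleftrightarrow> x \<in> \<Union>A \<or> x \<in> fst ` L"
  unfolding glue_edges_def Union_Un_distrib image_Union[symmetric] by (auto simp: image_iff) (metis fst_conv)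

lemma Inr_in_Union_glue_edges: "Inr p \<in> \<Union>(glue_edges A B L) \<longleftrightarrow> p \<in> \<Union>B \<or> p \<in> snd ` L"
  unfolding glue_edges_def Union_Un_distrib image_Union[symmetric] by (auto simp: image_iff) (metis snd_conv)

section \<open>Replacing a vertex by a gadget\<close>

definition port_connected :: "'b set \<Rightarrow> 'b set set \<Rightarrow> 'b set \<Rightarrow> 'b set \<Rightarrow> bool" where
  "port_connected W TP ST SM \<longleftrightarrow>
     (\<forall>a\<in>W. \<exists>p\<in>ST \<union> SM. reachable TP a p) \<and> (\<forall>p\<in>ST. \<forall>p'\<in>ST. reachable TP p p')"

text \<open>ST, SC and SM are the ports whose links replace tree, cycle and matching edges at the
  replaced vertex. Matching links join the tree, so TP must reach every vertex from ST or SM and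
  connect ST; the bound on card TP is what gives the glued tree fewer edges than vertices.\<close>
definition gadget_decomposition ::
  "'b set \<Rightarrow> 'b set set \<Rightarrow> 'b set \<Rightarrow> 'b set \<Rightarrow> 'b set \<Rightarrow>
    'b set set \<Rightarrow> 'b set set \<Rightarrow> 'b set set \<Rightarrow> bool"
where
  "gadget_decomposition W EP ST SC SM TP CP MP \<longleftrightarrow>
     TP \<union> CP \<union> MP = EP \<and> TP \<inter> CP = {} \<and> TP \<inter> MP = {} \<and> CP \<inter> MP = {} \<and>
     port_connected W TP ST SM \<and> card TP + card SM < card W \<and>
     (\<forall>a \<in> \<Union>CP \<union> SC. degree CP a + (if a \<in> SC then 1 else 0) = 2) \<and>
     pairwise disjnt MP"

definition port_pattern :: "'b set \<Rightarrow> 'b set \<Rightarrow> 'b set \<Rightarrow> 'b set \<Rightarrow> bool" where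
  "port_pattern S ST SC SM \<longleftrightarrow>
     ST \<union> SC \<union> SM = S \<and> ST \<inter> SC = {} \<and> ST \<inter> SM = {} \<and> SC \<inter> SM = {} \<and>
     ST \<noteq> {} \<and> (SC = {} \<or> card SC = 2) \<and> card SM \<le> 1"

definition gadget_admissible :: "'b set \<Rightarrow> 'b set set \<Rightarrow> 'b set \<Rightarrow> bool" where
  "gadget_admissible W EP S \<longleftrightarrow>
     (\<forall>ST SC SM. port_pattern S ST SC SM \<longrightarrow> (\<exists>TP CP MP. gadget_decomposition W EP ST SC SM TP CP MP))"

lemma port_connected_if_connected:
  assumes "connected_on K TP" "K = W" "ST \<subseteq> W" "ST \<noteq> {}"
  shows "port_connected W TP ST SM"
  using assms unfolding port_connected_def connected_on_def by blast

lemma port_connected_if_two_components: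
  assumes "connected_on K TP" "connected_on K' TP" "K \<union> K' = W" "ST \<subseteq> K" "ST \<noteq> {}" "m \<in> K'" "m \<in> SM"
  shows "port_connected W TP ST SM"
  using assms unfolding port_connected_def connected_on_def by blast

lemma port_pattern_three_cases:
  assumes "port_pattern S ST SC SM" "card S = 3"
  obtains (tree) "ST = S" "SC = {}" "SM = {}"
    | (matched) m where "m \<in> S" "ST = S - {m}" "SC = {}" "SM = {m}"
    | (cycle) a b where "a \<in> S" "b \<in> S" "a \<noteq> b" "ST = S - {a, b}" "SC = {a, b}" "SM = {}"
proof -
  have S: "ST \<union> SC \<union> SM = S" "ST \<inter> SC = {}" "ST \<inter> SM = {}" "SC \<inter> SM = {}" "ST \<noteq> {}"
    and SC: "SC = {} \<or> card SC = 2" and SM: "card SM \<le> 1"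
    using assms(1) unfolding port_pattern_def by auto
  have "finite S"
    by (rule card_ge_0_finite) (use assms(2) in simp)
  then have finite: "finite ST" "finite SC" "finite SM"
    using S(1) by auto
  from SC show thesis
  proof
    assume "SC = {}"
    from SM finite(3) have "SM = {} \<or> (\<exists>m. SM = {m})"
      by (metis card_0_eq card_1_singleton_iff le_Suc_eq One_nat_def le_zero_eq)
    then show thesis
      using S \<open>SC = {}\<close> tree matched by blast
  next
    assume "card SC = 2"
    then obtain a b where ab: "SC = {a, b}" "a \<noteq> b"
      by (meson card_2_iff)
    have "card ST + card SC + card SM = card S"
      using S finite by (metis card_Un_disjoint finite_Un Int_Un_distrib2 Un_empty)
    moreover have "card ST \<ge> 1"
      using S(5) finite(1) by (simp add: Suc_le_eq card_gt_0_iff)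
    ultimately have "card SM = 0"
      using assms(2) \<open>card SC = 2\<close> by simp
    then have "SM = {}"
      using finite(3) by simp
    then show thesis
      using S ab cycle by blast
  qed
qed


locale vertex_replacement =
  fixes V :: "'a set" and E :: "'a set set" and u :: 'a
    and W :: "'b set" and EP :: "'b set set" and L :: "('a \<times> 'b) set"
  assumes graph: "graph V E" and graph_gadget: "graph W EP" and u_in_V: "u \<in> V"
    and neighbours: "{v \<in> V. {u, v} \<in> E} = fst ` L"
    and inj_fst: "inj_on fst L" and inj_snd: "inj_on snd L"
    and ports_in_gadget: "snd ` L \<subseteq> W" and L_nonempty: "L \<noteq> {}"
begin

definition edges_off_u :: "'a set set \<Rightarrow> 'a set set" where
  "edges_off_u X = {e \<in> X. u \<notin> e}"

definition links_of :: "'a set set \<Rightarrow> ('a \<times> 'b) set" where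
  "links_of X = {l \<in> L. {u, fst l} \<in> X}"

abbreviation HV :: "('a + 'b) set" where
  "HV \<equiv> Inl ` (V - {u}) \<union> Inr ` W"

abbreviation HE :: "('a + 'b) set set" where
  "HE \<equiv> glue_edges (edges_off_u E) EP L"

lemma link_endpoints:
  assumes "l \<in> L"
  shows "fst l \<in> V - {u}" "{u, fst l} \<in> E" "snd l \<in> W"
proof -
  have "fst l \<in> {v \<in> V. {u, v} \<in> E}"
    unfolding neighbours using assms by (rule imageI)
  then have "fst l \<in> V" and edge: "{u, fst l} \<in> E"
    by simp_all
  moreover have "fst l \<noteq> u"
    using graph_edge_endpoints(3)[OF graph edge] by simp
  ultimately show "fst l \<in> V - {u}" "{u, fst l} \<in> E"
    by auto
  show "snd l \<in> W"
    using assms ports_in_gadget by blast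
qed

lemma finite_L: "finite L"
proof -
  have "finite (fst ` L)"
    unfolding neighbours[symmetric] using graph unfolding graph_def by simp
  then show ?thesis
    using inj_fst finite_imageD by blast
qed

lemma inj_link_edge: "inj_on (\<lambda>l. {u, fst l}) L"
proof (rule inj_onI)
  fix l l' assume "l \<in> L" "l' \<in> L" "{u, fst l} = {u, fst l'}"
  moreover from this have "fst l \<noteq> u" "fst l' \<noteq> u"
    using link_endpoints(1) by blast+
  ultimately show "l = l'"
    using inj_fst by (auto simp: doubleton_eq_iff inj_on_eq_iff)
qed

lemma edges_at_u:
  assumes "X \<subseteq> E"
  shows "{e \<in> X. u \<in> e} = (\<lambda>l. {u, fst l}) ` links_of X"
proof (intro equalityI subsetI)
  fix e assume e: "e \<in> {e \<in> X. u \<in> e}"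
  with assms graph obtain x y where "x \<in> V" "y \<in> V" "e = {x, y}"
    unfolding graph_def by blast
  with e have "e = {u, y} \<and> y \<in> V \<or> e = {u, x} \<and> x \<in> V"
    by (auto simp: insert_commute)
  then obtain v where "e = {u, v}" "v \<in> V"
    by blast
  with e assms have "v \<in> fst ` L"
    unfolding neighbours[symmetric] by auto
  then obtain l where "l \<in> L" "fst l = v"
    by blast
  with e \<open>e = {u, v}\<close> show "e \<in> (\<lambda>l. {u, fst l}) ` links_of X"
    unfolding links_of_def by auto
qed (auto simp: links_of_def)

lemma card_edges_off_u:
  assumes "X \<subseteq> E"
  shows "card X = card (edges_off_u X) + card (links_of X)"
proof -
  have "X = edges_off_u X \<union> {e \<in> X. u \<in> e}" "edges_off_u X \<inter> {e \<in> X. u \<in> e} = {}"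
    unfolding edges_off_u_def by auto
  moreover have "finite X"
    using assms graph_finite_edges[OF graph] finite_subset by blast
  moreover have "card {e \<in> X. u \<in> e} = card (links_of X)"
    unfolding edges_at_u[OF assms]
    by (rule card_image, rule inj_on_subset[OF inj_link_edge]) (auto simp: links_of_def)
  ultimately show ?thesis
    by (metis card_Un_disjoint finite_Un)
qed

lemma degree_edges_off_u:
  assumes "X \<subseteq> E" "x \<noteq> u"
  shows "degree X x = degree (edges_off_u X) x + card {l \<in> links_of X. fst l = x}"
proof -
  have eq: "{e \<in> X. x \<in> e} = {e \<in> edges_off_u X. x \<in> e} \<union> (\<lambda>l. {u, fst l}) ` {l \<in> links_of X. fst l = x}"
    using edges_at_u[OF assms(1)] assms(2) unfolding edges_off_u_def by auto
  let ?at_u = "(\<lambda>l. {u, fst l}) ` {l \<in> links_of X. fst l = x}"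
  have "finite X"
    using assms graph_finite_edges[OF graph] finite_subset by blast
  then have "card ({e \<in> edges_off_u X. x \<in> e} \<union> ?at_u) = card {e \<in> edges_off_u X. x \<in> e} + card ?at_u"
    by (intro card_Un_disjoint) (auto simp: edges_off_u_def links_of_def finite_L)
  moreover have "card ?at_u = card {l \<in> links_of X. fst l = x}"
    by (rule card_image, rule inj_on_subset[OF inj_link_edge]) (auto simp: links_of_def)
  ultimately show ?thesis
    unfolding degree_def eq by linarith
qed

lemma finite_edges_off_u: "X \<subseteq> E \<Longrightarrow> finite (edges_off_u X)"
  using graph_finite_edges[OF graph] unfolding edges_off_u_def by (simp add: finite_subset)

lemma finite_links_of: "finite (links_of X)"
  using finite_L unfolding links_of_def by simp

lemma graph_HE: "graph HV HE"
proof (rule graph_glue_edges[OF _ graph_gadget])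
  show "graph (V - {u}) (edges_off_u E)"
    using graph unfolding graph_def edges_off_u_def by fastforce
  show "L \<subseteq> (V - {u}) \<times> W"
    using link_endpoints by fastforce
qed

lemma card_HV: "card HV + 1 = card V + card W"
proof -
  have "finite V" "finite W"
    using graph graph_gadget unfolding graph_def by auto
  then have "card HV = card (V - {u}) + card W"
    by (subst card_Un_disjoint) (auto simp: card_image)
  moreover have "card V > 0"
    using u_in_V \<open>finite V\<close> card_gt_0_iff by blast
  ultimately show ?thesis
    using u_in_V by (simp add: card_Diff_singleton)
qed

end

locale decomposed_vertex_replacement = vertex_replacement +
  fixes T C M :: "'a set set"
  assumes tree: "spanning_tree V E T" and cycles: "two_regular_sub E C" and matching: "matching E M"
    and partition: "T \<union> C \<union> M = E"
    and disjoint: "T \<inter> C = {}" "T \<inter> M = {}" "C \<inter> M = {}"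
begin

lemma subset_E: "T \<subseteq> E" "C \<subseteq> E" "M \<subseteq> E"
  using partition by auto

lemma links_partition: "links_of T \<union> links_of C \<union> links_of M = L"
  using link_endpoints(2) partition unfolding links_of_def by blast

lemma links_disjoint: "links_of T \<inter> links_of C = {}" "links_of T \<inter> links_of M = {}" "links_of C \<inter> links_of M = {}"
  using disjoint unfolding links_of_def by auto

lemma card_links_cycles: "links_of C = {} \<or> card (links_of C) = 2"
proof (cases "links_of C = {}")
  case False
  then have "u \<in> \<Union>C"
    unfolding links_of_def by auto
  then have "degree C u = 2"
    using cycles unfolding two_regular_sub_def by blast
  moreover have "degree C u = card (links_of C)"
    unfolding degree_def edges_at_u[OF subset_E(2)]
    by (rule card_image, rule inj_on_subset[OF inj_link_edge]) (auto simp: links_of_def)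
  ultimately show ?thesis
    by simp
qed simp

lemma card_links_matching: "card (links_of M) \<le> 1"
proof -
  have "l = l'" if "l \<in> links_of M" "l' \<in> links_of M" for l l'
  proof (rule ccontr)
    assume "l \<noteq> l'"
    moreover have "l \<in> L" "l' \<in> L"
      using that unfolding links_of_def by auto
    ultimately have ne: "{u, fst l} \<noteq> {u, fst l'}"
      using inj_on_eq_iff[OF inj_link_edge] by metis
    have "{u, fst l} \<in> M" "{u, fst l'} \<in> M"
      using that unfolding links_of_def by auto
    moreover have "\<forall>e\<in>M. \<forall>f\<in>M. e \<noteq> f \<longrightarrow> e \<inter> f = {}"
      using matching unfolding matching_def by simp
    ultimately have "{u, fst l} \<inter> {u, fst l'} = {}"
      using ne by (meson bspec mp)
    then show False
      by simp
  qed
  moreover have "finite (links_of M)"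
    using finite_L unfolding links_of_def by simp
  ultimately show ?thesis
    by (simp add: card_le_Suc0_iff_eq)
qed

lemma links_tree_nonempty: "links_of T \<noteq> {}"
proof -
  obtain l where "l \<in> L"
    using L_nonempty by blast
  then have "fst l \<in> V" "fst l \<noteq> u"
    using link_endpoints(1) by auto
  then have "reachable T u (fst l)"
    using tree u_in_V unfolding spanning_tree_def connected_on_def by blast
  then obtain y where "{u, y} \<in> T"
    using \<open>fst l \<noteq> u\<close> by (cases rule: converse_rtranclpE) auto
  moreover have "y \<in> V"
    using graph_edge_endpoints(2)[OF graph] \<open>{u, y} \<in> T\<close> subset_E(1) by blast
  ultimately have "y \<in> fst ` L"
    unfolding neighbours[symmetric] using subset_E(1) by blast
  then obtain l' where "l' \<in> L" "fst l' = y"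
    by blast
  with \<open>{u, y} \<in> T\<close> have "l' \<in> links_of T"
    unfolding links_of_def by simp
  then show ?thesis
    by blast
qed

lemma port_pattern_links: "port_pattern (snd ` L) (snd ` links_of T) (snd ` links_of C) (snd ` links_of M)"
proof -
  have inj: "inj_on snd (links_of X)" for X
    by (rule inj_on_subset[OF inj_snd]) (auto simp: links_of_def)
  have "snd ` links_of X \<inter> snd ` links_of Y = snd ` (links_of X \<inter> links_of Y)" for X Y
    by (rule inj_on_image_Int[OF inj_snd, symmetric]) (auto simp: links_of_def)
  then show ?thesis
    unfolding port_pattern_def
    using links_partition links_disjoint links_tree_nonempty card_links_cycles card_links_matching
    by (auto simp: card_image[OF inj] simp flip: image_Un)
qed

lemma card_tree: "card T + 1 \<le> card V"
  using tree graph_subset[OF graph subset_E(1)] u_in_V tree_card_le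
  unfolding spanning_tree_def by blast

lemma reachable_tree_link:
  assumes "x \<in> V - {u}" "links_of T \<subseteq> LT"
  shows "\<exists>l\<in>links_of T. reachable (glue_edges (edges_off_u T) B LT) (Inl x) (Inr (snd l))"
proof -
  have "reachable T x u"
    using tree assms(1) u_in_V unfolding spanning_tree_def connected_on_def by blast
  then show ?thesis
    using assms(1)
  proof (induction rule: converse_rtranclp_induct)
    case (step x y)
    show ?case
    proof (cases "y = u")
      case True
      with step.hyps(1) have "{u, x} \<in> T"
        by (simp add: insert_commute)
      moreover have "x \<in> fst ` L"
        unfolding neighbours[symmetric] using step.prems \<open>{u, x} \<in> T\<close> subset_E(1) by blast
      ultimately obtain l where l: "l \<in> links_of T" "fst l = x"
        unfolding links_of_def by auto
      then have "{Inl x, Inr (snd l)} \<in> glue_edges (edges_off_u T) B LT"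
        using assms(2) glue_edges_link[of "fst l" "snd l"] by auto
      then show ?thesis
        using l(1) by blast
    next
      case False
      have "y \<in> V"
        using graph_edge_endpoints(2)[OF graph] step.hyps(1) subset_E(1) by blast
      with False obtain l where l: "l \<in> links_of T" "reachable (glue_edges (edges_off_u T) B LT) (Inl y) (Inr (snd l))"
        using step.IH by blast
      have "{x, y} \<in> edges_off_u T"
        using step.hyps(1) step.prems False unfolding edges_off_u_def by auto
      then have "{Inl x, Inl y} \<in> glue_edges (edges_off_u T) B LT"
        by (rule glue_edges_Inl_edge)
      with l show ?thesis
        by (blast intro: converse_rtranclp_into_rtranclp)
    qed
  qed simp
qed

context
  fixes TP CP MP :: "'b set set"
  assumes gadget: "gadget_decomposition W EP (snd ` links_of T) (snd ` links_of C) (snd ` links_of M) TP CP MP"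
begin

text \<open>The link replacing the matching edge at u goes into the tree.\<close>
abbreviation HT :: "('a + 'b) set set" where
  "HT \<equiv> glue_edges (edges_off_u T) TP (links_of T \<union> links_of M)"

abbreviation HC :: "('a + 'b) set set" where
  "HC \<equiv> glue_edges (edges_off_u C) CP (links_of C)"

abbreviation HM :: "('a + 'b) set set" where
  "HM \<equiv> glue_edges (edges_off_u M) MP {}"

lemma gadget_partition: "TP \<union> CP \<union> MP = EP" "TP \<inter> CP = {}" "TP \<inter> MP = {}" "CP \<inter> MP = {}"
  and gadget_port_connected: "port_connected W TP (snd ` links_of T) (snd ` links_of M)"
  and gadget_card: "card TP + card (snd ` links_of M) < card W"
  and gadget_cycle_degree:
    "\<forall>a \<in> \<Union>CP \<union> snd ` links_of C. degree CP a + (if a \<in> snd ` links_of C then 1 else 0) = 2"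
  and gadget_matching: "pairwise disjnt MP"
  using gadget unfolding gadget_decomposition_def by auto

lemma no_empty_gadget_edge: "{} \<notin> EP"
  using graph_gadget unfolding graph_def by auto

lemma finite_gadget_parts: "finite TP" "finite CP" "finite MP"
  using graph_finite_edges[OF graph_gadget] gadget_partition(1) by (metis finite_Un)+

lemma glued_partition: "HT \<union> HC \<union> HM = HE"
proof -
  have "edges_off_u T \<union> edges_off_u C \<union> edges_off_u M = edges_off_u E"
    using partition unfolding edges_off_u_def by auto
  moreover have "links_of T \<union> links_of M \<union> links_of C \<union> {} = L"
    using links_partition by auto
  ultimately show ?thesis
    unfolding glue_edges_Un[symmetric] gadget_partition(1) by simp
qed

lemma glued_subsets: "HT \<subseteq> HE" "HC \<subseteq> HE" "HM \<subseteq> HE"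
  unfolding glued_partition[symmetric]
  by (rule le_supI1[OF Un_upper1], rule le_supI1[OF Un_upper2], rule Un_upper2)

lemma glued_disjoint: "HT \<inter> HC = {}" "HT \<inter> HM = {}" "HC \<inter> HM = {}"
proof -
  have "edges_off_u X \<inter> edges_off_u Y = {}" if "X \<inter> Y = {}" for X Y
    using that unfolding edges_off_u_def by auto
  moreover have "{} \<notin> TP \<union> CP \<union> MP"
    using no_empty_gadget_edge gadget_partition(1) by simp
  ultimately show "HT \<inter> HC = {}" "HT \<inter> HM = {}" "HC \<inter> HM = {}"
    using disjoint gadget_partition(2-4) links_disjoint
    by (intro glue_edges_disjoint; auto)+
qed

lemma glued_tree_connected: "connected_on HV HT"
proof -
  obtain l0 where l0: "l0 \<in> links_of T"
    using links_tree_nonempty by blast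
  have reach_hub: "reachable HT (Inl x) (Inr (snd l0))" if x: "x \<in> V - {u}" for x
  proof -
    obtain l where l: "l \<in> links_of T" "reachable HT (Inl x) (Inr (snd l))"
      using reachable_tree_link[OF x Un_upper1] by blast
    moreover have "reachable TP (snd l) (snd l0)"
      using gadget_port_connected l(1) l0 unfolding port_connected_def by blast
    ultimately show ?thesis
      by (blast intro: rtranclp_trans reachable_glue_edges_Inr)
  qed
  show ?thesis
  proof (rule connected_on_if_reachable_root)
    fix w assume "w \<in> HV"
    then consider (left) x where "x \<in> V - {u}" "w = Inl x" | (right) a where "a \<in> W" "w = Inr a"
      by blast
    then show "reachable HT w (Inr (snd l0))"
    proof cases
      case right
      then obtain l where l: "l \<in> links_of T \<union> links_of M" "reachable TP a (snd l)"
        using gadget_port_connected unfolding port_connected_def by blast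
      have "{Inl (fst l), Inr (snd l)} \<in> HT"
        using glue_edges_link[of "fst l" "snd l"] l(1) by simp
      then have "reachable HT (Inr (snd l)) (Inl (fst l))"
        by (intro r_into_rtranclp) (simp add: insert_commute)
      moreover have "fst l \<in> V - {u}"
        using l(1) link_endpoints(1) unfolding links_of_def by blast
      ultimately show ?thesis
        using right reach_hub reachable_glue_edges_Inr[OF l(2)]
        by (blast intro: rtranclp_trans)
    qed (use reach_hub in blast)
  qed
qed

lemma glued_tree_card: "card HT + 1 \<le> card HV"
proof -
  have "{} \<notin> TP"
    using no_empty_gadget_edge gadget_partition(1) by blast
  then have "card HT = card (edges_off_u T) + card TP + card (links_of T) + card (links_of M)"
    using links_disjoint(2) finite_edges_off_u[OF subset_E(1)] finite_gadget_parts(1) finite_links_of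
    by (simp add: card_glue_edges card_Un_disjoint)
  moreover have "card (snd ` links_of M) = card (links_of M)"
    by (rule card_image, rule inj_on_subset[OF inj_snd]) (auto simp: links_of_def)
  ultimately show ?thesis
    using card_edges_off_u[OF subset_E(1)] card_tree gadget_card card_HV by linarith
qed

lemma glued_spanning_tree: "spanning_tree HV HE HT"
proof -
  show ?thesis
    unfolding spanning_tree_def
    using connected_acyclic_if_card_le[OF graph_subset[OF graph_HE glued_subsets(1)] glued_tree_connected
        glued_tree_card] glued_subsets(1) glued_tree_connected by blast
qed

lemma glued_two_regular: "two_regular_sub HE HC"
  unfolding two_regular_sub_def
proof (intro conjI ballI)
  show "HC \<subseteq> HE"
    by (fact glued_subsets(2))
next
  fix w assume w: "w \<in> \<Union>HC"
  note finite = finite_edges_off_u[OF subset_E(2)] finite_gadget_parts(2) finite_links_of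
  show "degree HC w = 2"
  proof (cases w)
    case (Inl x)
    have "x \<in> \<Union>(edges_off_u C) \<or> x \<in> fst ` links_of C"
      using w unfolding Inl Inl_in_Union_glue_edges .
    then have "x \<in> \<Union>C \<and> x \<noteq> u"
    proof
      assume "x \<in> fst ` links_of C"
      then obtain l where "l \<in> links_of C" "fst l = x"
        by blast
      then show ?thesis
        using link_endpoints(1)[of l] unfolding links_of_def by auto
    qed (auto simp: edges_off_u_def)
    then have "x \<in> \<Union>C" "x \<noteq> u"
      by simp_all
    then have "degree C x = 2"
      using cycles unfolding two_regular_sub_def by blast
    then show ?thesis
      using Inl finite degree_edges_off_u[OF subset_E(2) \<open>x \<noteq> u\<close>] by (simp add: degree_glue_edges_Inl)
  next
    case (Inr p)
    have "p \<in> \<Union>CP \<union> snd ` links_of C"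
      using w unfolding Inr Inr_in_Union_glue_edges by blast
    moreover have "card {l \<in> links_of C. snd l = p} = (if p \<in> snd ` links_of C then 1 else 0)"
      by (rule card_fiber_inj_on, rule inj_on_subset[OF inj_snd]) (auto simp: links_of_def)
    ultimately show ?thesis
      using Inr finite gadget_cycle_degree by (simp add: degree_glue_edges_Inr)
  qed
qed

lemma glued_matching: "matching HE HM"
proof -
  have "pairwise disjnt (edges_off_u M)"
    using matching unfolding matching_def edges_off_u_def pairwise_def disjnt_def by auto
  then have "pairwise disjnt HM"
    using glue_edges_pairwise_disjnt gadget_matching by blast
  with glued_subsets(3) show ?thesis
    unfolding matching_def pairwise_def disjnt_def by blast
qed

lemma three_decomposition_glued: "three_decomposition HV HE"
  unfolding three_decomposition_def
  using glued_spanning_tree glued_two_regular glued_matching glued_partition glued_disjoint by blast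

end

end

lemma (in vertex_replacement) three_decomposition_vertex_replacement:
  assumes "three_decomposition V E" "gadget_admissible W EP (snd ` L)"
  shows "three_decomposition HV HE"
proof -
  obtain T C M where "spanning_tree V E T" "two_regular_sub E C" "matching E M"
    "T \<union> C \<union> M = E" "T \<inter> C = {}" "T \<inter> M = {}" "C \<inter> M = {}"
    using assms(1) unfolding three_decomposition_def by blast
  then interpret decomposed_vertex_replacement V E u W EP L T C M
    by unfold_locales
  obtain TP CP MP where "gadget_decomposition W EP (snd ` links_of T) (snd ` links_of C) (snd ` links_of M) TP CP MP"
    using assms(2) port_pattern_links unfolding gadget_admissible_def by blast
  then show ?thesis
    by (rule three_decomposition_glued)
qed

section \<open>The Petersen gadget\<close>

lemma five_image: "{f i | i::nat. i < 5} = {f 0, f 1, f 2, f 3, f 4}"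
  by (auto simp: less_Suc_eq numeral_eq_Suc)

lemma P_edges_eq:
  "P_edges = {{1,2},{2,3},{3,4},{1,6},{2,7},{3,8},{4,9},{5,7},{6,8},{7,9},{8,5},{9,6}}"
  unfolding P_edges_def petersen_edges_def five_image
  by (simp only: Un_insert_left Un_empty_left Collect_mem_insert) (simp add: insert_commute numeral_2_eq_2)

lemma P_verts_eq: "P_verts = {1, 2, 3, 4, 5, 6, 7, 8, 9}"
  unfolding P_verts_def by auto

lemma petersen_ports: "{p \<in> P_verts. degree P_edges p = 2} = {1, 4, 5}"
  unfolding P_verts_eq P_edges_eq
  by (simp add: degree_insert degree_empty doubleton_eq_iff) auto

lemma graph_P: "graph P_verts P_edges"
  unfolding P_verts_eq P_edges_eq by (intro graph_insert_edge graph_no_edges) simp_all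

lemma pairwise_insert_ball:
  "pairwise R (insert x S) \<longleftrightarrow> (\<forall>y\<in>S. y \<noteq> x \<longrightarrow> R x y \<and> R y x) \<and> pairwise R S"
  by (auto simp: pairwise_insert)

lemmas gadget_simps = P_edges_eq P_verts_eq doubleton_eq_iff insert_commute pairwise_insert_ball disjnt_def
  degree_insert degree_empty

text \<open>Each vertex set K below is listed so that every vertex has a TP-neighbour later in the
  list, which is what the chain of connected_on_insert steps needs.\<close>
lemma petersen_gadget_tree:
  "gadget_decomposition P_verts P_edges {1,4,5} {} {}
     {{2,3},{1,6},{2,7},{3,8},{4,9},{7,9},{8,5},{9,6}} {} {{1,2},{3,4},{5,7},{6,8}}"
  unfolding gadget_decomposition_def
  by (intro conjI port_connected_if_connected[where K = "{5,8,3,2,7,4,9,6,1}"]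
        connected_on_singleton connected_on_insert;
      simp add: gadget_simps)

lemma petersen_gadget_matched_1:
  "gadget_decomposition P_verts P_edges {4,5} {} {1}
     {{5,7},{6,8},{8,5},{3,8},{4,9},{2,3},{3,4}} {{1,2},{2,7},{7,9},{9,6},{1,6}} {}"
  unfolding gadget_decomposition_def
  by (intro conjI port_connected_if_two_components[where K = "{7,5,6,2,8,3,9,4}" and K' = "{1}" and m = 1]
        connected_on_singleton connected_on_insert;
      simp add: gadget_simps)

lemma petersen_gadget_matched_4:
  "gadget_decomposition P_verts P_edges {1,5} {} {4}
     {{5,7},{7,9},{8,5},{1,6},{2,7},{1,2},{2,3}} {{3,4},{3,8},{6,8},{9,6},{4,9}} {}"
  unfolding gadget_decomposition_def
  by (intro conjI port_connected_if_two_components[where K = "{8,9,5,3,7,2,6,1}" and K' = "{4}" and m = 4]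
        connected_on_singleton connected_on_insert;
      simp add: gadget_simps)

lemma petersen_gadget_matched_5:
  "gadget_decomposition P_verts P_edges {1,4} {} {5}
     {{6,8},{7,9},{9,6},{1,6},{4,9},{1,2},{3,4}} {{5,7},{2,7},{2,3},{3,8},{8,5}} {}"
  unfolding gadget_decomposition_def
  by (intro conjI port_connected_if_two_components[where K = "{3,4,7,9,8,2,6,1}" and K' = "{5}" and m = 5]
        connected_on_singleton connected_on_insert;
      simp add: gadget_simps)

lemma petersen_gadget_cycle_14:
  "gadget_decomposition P_verts P_edges {5} {1,4} {}
     {{6,8},{7,9},{8,5},{9,6},{1,6},{2,7},{3,8},{4,9}} {{1,2},{2,3},{3,4}} {{5,7}}"
  unfolding gadget_decomposition_def
  by (intro conjI port_connected_if_connected[where K = "{2,4,7,3,5,9,8,6,1}"]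
        connected_on_singleton connected_on_insert;
      simp add: gadget_simps)

lemma petersen_gadget_cycle_15:
  "gadget_decomposition P_verts P_edges {4} {1,5} {}
     {{5,7},{6,8},{7,9},{9,6},{1,6},{2,7},{4,9},{3,4}} {{1,2},{2,3},{3,8},{8,5}} {}"
  unfolding gadget_decomposition_def
  by (intro conjI port_connected_if_connected[where K = "{3,2,5,4,7,9,8,6,1}"]
        connected_on_singleton connected_on_insert;
      simp add: gadget_simps)

lemma petersen_gadget_cycle_45:
  "gadget_decomposition P_verts P_edges {1} {4,5} {}
     {{6,8},{7,9},{8,5},{9,6},{1,6},{3,8},{4,9},{1,2}} {{3,4},{2,3},{2,7},{5,7}} {}"
  unfolding gadget_decomposition_def
  by (intro conjI port_connected_if_connected[where K = "{4,7,3,5,9,8,2,6,1}"]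
        connected_on_singleton connected_on_insert;
      simp add: gadget_simps)

lemma petersen_gadget_admissible: "gadget_admissible P_verts P_edges {1, 4, 5}"
  unfolding gadget_admissible_def
proof (intro allI impI)
  fix ST SC SM :: "nat set"
  assume pattern: "port_pattern {1, 4, 5} ST SC SM"
  show "\<exists>TP CP MP. gadget_decomposition P_verts P_edges ST SC SM TP CP MP"
  proof (rule port_pattern_three_cases[OF pattern])
    assume "ST = {1, 4, 5}" "SC = {}" "SM = {}"
    then show ?thesis
      using petersen_gadget_tree by blast
  next
    fix m assume "m \<in> {1, 4, 5}" "ST = {1, 4, 5} - {m}" "SC = {}" "SM = {m}"
    then have "SC = {} \<and> (ST = {4, 5} \<and> SM = {1} \<or> ST = {1, 5} \<and> SM = {4} \<or> ST = {1, 4} \<and> SM = {5})"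
      by auto
    then show ?thesis
      using petersen_gadget_matched_1 petersen_gadget_matched_4 petersen_gadget_matched_5 by blast
  next
    fix a b assume "a \<in> {1, 4, 5}" "b \<in> {1, 4, 5}" "a \<noteq> b" "ST = {1, 4, 5} - {a, b}" "SC = {a, b}" "SM = {}"
    then have "SM = {} \<and> (ST = {5} \<and> SC = {1, 4} \<or> ST = {4} \<and> SC = {1, 5} \<or> ST = {1} \<and> SC = {4, 5})"
      by auto
    then show ?thesis
      using petersen_gadget_cycle_14 petersen_gadget_cycle_15 petersen_gadget_cycle_45 by blast
  qed simp
qed

theorem lemma18:
  fixes V :: "'a set" and E :: "'a set set" and u v1 v2 v3 :: 'a and p1 p2 p3 :: nat
  assumes "cubic V E"
    and "three_decomposition V E"
    and "u \<in> V"
    and "distinct [v1, v2, v3]"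
    and "{v \<in> V. {u, v} \<in> E} = {v1, v2, v3}"
    and "distinct [p1, p2, p3]"
    and "{p \<in> P_verts. degree P_edges p = 2} = {p1, p2, p3}"
  shows "three_decomposition (H_verts V u) (H_edges E u v1 v2 v3 p1 p2 p3)"
proof -
  define L where "L = {(v1, p1), (v2, p2), (v3, p3)}"
  have L_ports: "snd ` L = {1, 4, 5}"
    using assms(7) unfolding petersen_ports L_def by simp
  interpret vertex_replacement V E u P_verts P_edges L
  proof
    show "graph V E"
      using assms(1) unfolding cubic_def by blast
    show "{v \<in> V. {u, v} \<in> E} = fst ` L"
      using assms(5) unfolding L_def by simp
    show "inj_on fst L" "inj_on snd L"
      using assms(4,6) unfolding L_def by (auto simp: inj_on_def)
    show "snd ` L \<subseteq> P_verts"
      unfolding L_ports P_verts_eq by simp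
  qed (use graph_P assms(3) L_def in auto)
  have "three_decomposition HV HE"
    using petersen_gadget_admissible unfolding L_ports[symmetric]
    by (rule three_decomposition_vertex_replacement[OF assms(2)])
  moreover have "H_edges E u v1 v2 v3 p1 p2 p3 = HE"
    unfolding H_edges_def glue_edges_def edges_off_u_def L_def by simp
  ultimately show ?thesis
    unfolding H_verts_def by simp
qed

end
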